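(* Let $\mathcal{M} = (S, A, T, D, R, \gamma)$ be a Markov decision process with finite state set $S$, finite action set $A$, transition probabilities $T_{s,a}(s')$, initial-state distribution $D$, discount factor $\gamma \in (0,1)$, and reward $R(s) = \langle w^*, \phi(s)\rangle$ for a feature map $\phi\colon S \to \mathbb{R}^k$ and a unit vector $w^* \in \mathbb{R}^k$. Let $A^L\colon \mathbb{R}^k \to \mathbb{R}^\ell$ be a linear map (the learner's worldview), and let $\pi^T, \pi^L$ be two policies. Suppose that $\Vert A^L(\mu(\pi^T) - \mu(\pi^L))\Vert < \varepsilon$. Then \[ \vert \langle w^*, \mu(\pi^T) - \mu(\pi^L)\rangle \vert < \frac{\varepsilon}{\sigma(A^L)} + \rho(A^L; w^* ) \cdot \operatorname{diam} \mu(\Pi), \] where $\sigma(A^L) = \min_{v \perp \ker A^L,\ \Vert v \Vert = 1} \Vert A^L v\Vert$.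
   Context: A policy $\pi$ is a family of probability distributions $\pi_s$ on $A$ indexed by $s \in S$; $\Pi$ denotes the set of all policies. For a policy $\pi$, $\mu(\pi) = \mathbb{E}\left(\sum_{t=0}^\infty \gamma^t \phi(s_t)\right) \in \mathbb{R}^k$ is its vector of discounted feature expectations, the expectation taken over trajectories $(s_0, s_1, \dots)$ with $s_0 \sim D$, actions drawn from $\pi$ and transitions from $T$. $\operatorname{diam}\mu(\Pi) = \sup_{\mu_0,\mu_1 \in \mu(\Pi)} \Vert \mu_0 - \mu_1\Vert$, with $\Vert\cdot\Vert$ the Euclidean norm. $\ker A^L = \{v \in \mathbb{R}^k : A^L v = 0\}$. The teaching risk is $\rho(A^L; w^* ) := \max_{v \in \ker A^L,\ \Vert v \Vert \le 1} \langle w^*, v\rangle$ (equivalently, the norm of the orthogonal projection of $w^*$ onto $\ker A^L$). *)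

theory Defs
  imports "HOL-Probability.Probability"
begin

text \<open>A (stationary, state-indexed) policy is a map pol :: 's => 'act pmf;
  the set of all policies is UNIV.\<close>

primrec state_dist ::
  "('s \<Rightarrow> 'act \<Rightarrow> 's pmf) \<Rightarrow> 's pmf \<Rightarrow> ('s \<Rightarrow> 'act pmf) \<Rightarrow> nat \<Rightarrow> 's pmf" where
  "state_dist T D pol 0 = D"
| "state_dist T D pol (Suc t) =
     bind_pmf (state_dist T D pol t) (\<lambda>s. bind_pmf (pol s) (\<lambda>a. T s a))"

definition feat_exp ::
  "('s \<Rightarrow> 'act \<Rightarrow> 's pmf) \<Rightarrow> 's pmf \<Rightarrow> real \<Rightarrow> ('s \<Rightarrow> real^'k)
     \<Rightarrow> ('s \<Rightarrow> 'act pmf) \<Rightarrow> real^'k" where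
  "feat_exp T D \<gamma> \<phi> pol =
     (\<Sum>t. \<gamma> ^ t *\<^sub>R measure_pmf.expectation (state_dist T D pol t) \<phi>)"

definition teaching_risk :: "(real^'k \<Rightarrow> 'b::real_normed_vector) \<Rightarrow> real^'k \<Rightarrow> real" where
  "teaching_risk A w = Sup {w \<bullet> v | v. A v = 0 \<and> norm v \<le> 1}"

definition sigma_min :: "(real^'k \<Rightarrow> 'b::real_normed_vector) \<Rightarrow> real" where
  "sigma_min A = Inf {norm (A v) | v. (\<forall>u. A u = 0 \<longrightarrow> v \<bullet> u = 0) \<and> norm v = 1}"

end

theory Submission
  imports Defs
begin

text \<open>Split the difference x of the two feature expectations orthogonally as
  x = y + z with y in the kernel of A and z orthogonal to it. The learner only
  sees A x = A z, and on the orthogonal complement of the kernel A is bounded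
  below by sigma(A), so |<w, z>| \<le> norm z \<le> norm (A x) / sigma(A). The
  kernel part contributes at most rho(A; w) norm y, and norm y \<le> norm x is at
  most the diameter of the set of all feature expectations.\<close>

lemma norm_expectation_pmf_le_sum_norm:
  fixes p :: "'s::finite pmf" and f :: "'s \<Rightarrow> 'a::{banach, second_countable_topology}"
  shows "norm (measure_pmf.expectation p f) \<le> (\<Sum>s\<in>UNIV. norm (f s))"
proof -
  have "measure_pmf.expectation p f = (\<Sum>s\<in>UNIV. pmf p s *\<^sub>R f s)"
    by (rule integral_measure_pmf) auto
  also have "norm \<dots> \<le> (\<Sum>s\<in>UNIV. norm (pmf p s *\<^sub>R f s))"
    by (rule norm_sum)
  also have "\<dots> \<le> (\<Sum>s\<in>UNIV. norm (f s))"
    by (intro sum_mono) (simp add: pmf_le_1 mult_left_le_one_le)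
  finally show ?thesis .
qed

lemma norm_feat_exp_le:
  fixes T :: "'s::finite \<Rightarrow> 'act \<Rightarrow> 's pmf" and \<phi> :: "'s \<Rightarrow> real^'k"
  assumes "\<bar>\<gamma>\<bar> < 1"
  shows "norm (feat_exp T D \<gamma> \<phi> pol) \<le> (\<Sum>s\<in>UNIV. norm (\<phi> s)) / (1 - \<bar>\<gamma>\<bar>)"
proof -
  define M where "M = (\<Sum>s\<in>UNIV. norm (\<phi> s))"
  define f where "f t = \<gamma> ^ t *\<^sub>R measure_pmf.expectation (state_dist T D pol t) \<phi>" for t
  have f_le: "norm (f t) \<le> \<bar>\<gamma>\<bar> ^ t * M" for t
    unfolding f_def M_def
    by (simp add: power_abs mult_left_mono norm_expectation_pmf_le_sum_norm)
  have geometric: "summable (\<lambda>t. \<bar>\<gamma>\<bar> ^ t * M)"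
    using assms by (intro summable_mult2 summable_geometric) simp
  have summable_norm_f: "summable (\<lambda>t. norm (f t))"
    by (rule summable_norm_comparison_test[OF _ geometric]) (use f_le in blast)
  have "norm (feat_exp T D \<gamma> \<phi> pol) \<le> (\<Sum>t. norm (f t))"
    unfolding feat_exp_def f_def[symmetric] by (rule summable_norm[OF summable_norm_f])
  also have "\<dots> \<le> (\<Sum>t. \<bar>\<gamma>\<bar> ^ t * M)"
    by (rule suminf_le[OF f_le summable_norm_f geometric])
  also have "\<dots> = M / (1 - \<bar>\<gamma>\<bar>)"
    using assms by (simp add: suminf_mult2[symmetric] suminf_geometric)
  finally show ?thesis unfolding M_def .
qed

lemma bounded_range_feat_exp:
  fixes T :: "'s::finite \<Rightarrow> 'act \<Rightarrow> 's pmf" and \<phi> :: "'s \<Rightarrow> real^'k"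
  assumes "\<bar>\<gamma>\<bar> < 1"
  shows "bounded (range (feat_exp T D \<gamma> \<phi>))"
  unfolding bounded_iff using norm_feat_exp_le[OF assms] by blast

lemma kernel_orthogonal_decomp:
  fixes A :: "'a::euclidean_space \<Rightarrow> 'b::real_vector"
  assumes "linear A"
  obtains y z where "A y = 0" "\<forall>u. A u = 0 \<longrightarrow> z \<bullet> u = 0" "x = y + z"
proof -
  define K where "K = {u. A u = 0}"
  have "subspace K"
    unfolding K_def using assms by (rule linear_subspace_kernel)
  then have "x \<in> K + K\<^sup>\<bottom>"
    by (simp add: subspace_sum_orthogonal_comp)
  then obtain y z where "y \<in> K" "z \<in> K\<^sup>\<bottom>" "x = y + z"
    by (rule set_plus_elim)
  moreover have "z \<bullet> u = 0" if "z \<in> K\<^sup>\<bottom>" "A u = 0" for z u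
    using that unfolding K_def orthogonal_comp_def orthogonal_def by (simp add: inner_commute)
  ultimately show thesis
    using that unfolding K_def by blast
qed

lemma linear_bounded_below_on_kernel_orthogonal:
  fixes A :: "'a::euclidean_space \<Rightarrow> 'b::euclidean_space"
  assumes "linear A"
  obtains e where "e > 0" "\<And>v. \<forall>u. A u = 0 \<longrightarrow> v \<bullet> u = 0 \<Longrightarrow> e * norm v \<le> norm (A v)"
proof -
  define P where "P = {v. \<forall>u. A u = 0 \<longrightarrow> v \<bullet> u = 0}"
  have "subspace P"
    unfolding P_def subspace_def by (auto simp: inner_add_left)
  moreover have "\<forall>v\<in>P. A v = 0 \<longrightarrow> v = 0"
    unfolding P_def by auto
  moreover have "bounded_linear A"
    using assms by (simp add: linear_conv_bounded_linear)
  ultimately obtain e where "e > 0" "\<forall>v\<in>P. e * norm v \<le> norm (A v)"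
    using injective_imp_isometric[OF closed_subspace] by blast
  then show thesis
    using that unfolding P_def by blast
qed

lemma sigma_min_mult_norm_le:
  fixes A :: "real^'k \<Rightarrow> 'b::real_normed_vector"
  assumes "linear A" and "\<forall>u. A u = 0 \<longrightarrow> v \<bullet> u = 0"
  shows "sigma_min A * norm v \<le> norm (A v)"
proof (cases "v = 0")
  case True
  then show ?thesis using assms(1) by (simp add: linear_0)
next
  case False
  have "norm (A (v /\<^sub>R norm v))
          \<in> {norm (A v) | v. (\<forall>u. A u = 0 \<longrightarrow> v \<bullet> u = 0) \<and> norm v = 1}"
    using assms(2) False by auto
  then have "sigma_min A \<le> norm (A (v /\<^sub>R norm v))"
    unfolding sigma_min_def by (rule cInf_lower) (auto intro: bdd_belowI[of _ 0])
  also have "\<dots> = norm (A v) / norm v"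
    using assms(1) by (simp add: linear_cmul divide_inverse)
  finally show ?thesis
    using False by (simp add: field_simps)
qed

lemma sigma_min_pos:
  fixes A :: "real^'k \<Rightarrow> 'b::euclidean_space"
  assumes "linear A" and "A \<noteq> (\<lambda>_. 0)"
  shows "0 < sigma_min A"
proof -
  define S where "S = {norm (A v) | v. (\<forall>u. A u = 0 \<longrightarrow> v \<bullet> u = 0) \<and> norm v = 1}"
  obtain e where "e > 0" and e: "\<And>v. \<forall>u. A u = 0 \<longrightarrow> v \<bullet> u = 0 \<Longrightarrow> e * norm v \<le> norm (A v)"
    using linear_bounded_below_on_kernel_orthogonal[OF assms(1)] by blast
  obtain x where "A x \<noteq> 0"
    using assms(2) by auto
  moreover obtain y z where "A y = 0" and z: "\<forall>u. A u = 0 \<longrightarrow> z \<bullet> u = 0" and "x = y + z"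
    using kernel_orthogonal_decomp[OF assms(1)] by blast
  ultimately have "A z \<noteq> 0"
    using assms(1) by (simp add: linear_add)
  then have "z \<noteq> 0"
    using assms(1) by (auto simp: linear_0)
  then have "norm (A (z /\<^sub>R norm z)) \<in> S"
    unfolding S_def using z by auto
  moreover have "e \<le> s" if s: "s \<in> S" for s
  proof -
    obtain v where "\<forall>u. A u = 0 \<longrightarrow> v \<bullet> u = 0" "norm v = 1" "s = norm (A v)"
      using s unfolding S_def by blast
    then show ?thesis
      using e[of v] by simp
  qed
  ultimately have "e \<le> Inf S"
    by (intro cInf_greatest) auto
  with \<open>e > 0\<close> show ?thesis
    unfolding sigma_min_def S_def by simp
qed

lemma teaching_risk_bdd_above:
  fixes w :: "real^'k"
  shows "bdd_above {w \<bullet> v | v. A v = 0 \<and> norm v \<le> 1}"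
proof (rule bdd_aboveI)
  fix r assume "r \<in> {w \<bullet> v | v. A v = 0 \<and> norm v \<le> 1}"
  then obtain v where "r = w \<bullet> v" "norm v \<le> 1" by blast
  then show "r \<le> norm w"
    using Cauchy_Schwarz_ineq2[of w v] mult_left_le[of "norm v" "norm w"] by simp
qed

lemma teaching_risk_nonneg:
  fixes A :: "real^'k \<Rightarrow> 'b::real_normed_vector"
  assumes "linear A"
  shows "0 \<le> teaching_risk A w"
proof -
  have "w \<bullet> 0 \<in> {w \<bullet> v | v. A v = 0 \<and> norm v \<le> 1}"
    using assms by (auto simp: linear_0 intro!: exI[of _ 0])
  then have "w \<bullet> 0 \<le> teaching_risk A w"
    unfolding teaching_risk_def using teaching_risk_bdd_above by (rule cSup_upper)
  then show ?thesis
    by simp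
qed

lemma abs_inner_kernel_le_teaching_risk:
  fixes A :: "real^'k \<Rightarrow> 'b::real_normed_vector"
  assumes "linear A" and "A y = 0"
  shows "\<bar>w \<bullet> y\<bar> \<le> teaching_risk A w * norm y"
proof (cases "y = 0")
  case True
  then show ?thesis using teaching_risk_nonneg[OF assms(1)] by simp
next
  case False
  define u where "u = y /\<^sub>R norm y"
  have "w \<bullet> v \<le> teaching_risk A w" if "v = u \<or> v = - u" for v
  proof -
    have "w \<bullet> v \<in> {w \<bullet> v | v. A v = 0 \<and> norm v \<le> 1}"
      using assms that False unfolding u_def by (auto simp: linear_cmul linear_neg)
    then show ?thesis
      unfolding teaching_risk_def using teaching_risk_bdd_above by (rule cSup_upper)
  qed
  from this[of u] this[of "- u"]
  have "w \<bullet> u \<le> teaching_risk A w" "- (w \<bullet> u) \<le> teaching_risk A w"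
    by simp_all
  moreover have "w \<bullet> u = (w \<bullet> y) / norm y"
    unfolding u_def by (simp add: field_simps)
  ultimately have "\<bar>(w \<bullet> y) / norm y\<bar> \<le> teaching_risk A w"
    by (simp add: abs_le_iff)
  then show ?thesis
    using False by (simp add: abs_divide field_simps)
qed

lemma abs_inner_lt_sigma_min_teaching_risk:
  fixes A :: "real^'k \<Rightarrow> 'b::euclidean_space"
  assumes "linear A" and "A \<noteq> (\<lambda>_. 0)" and "norm w \<le> 1" and "norm (A x) < \<epsilon>"
  shows "\<bar>w \<bullet> x\<bar> < \<epsilon> / sigma_min A + teaching_risk A w * norm x"
proof -
  obtain y z where y: "A y = 0" and z: "\<forall>u. A u = 0 \<longrightarrow> z \<bullet> u = 0" and x: "x = y + z"
    using kernel_orthogonal_decomp[OF assms(1)] by blast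
  have \<sigma>: "0 < sigma_min A"
    using sigma_min_pos[OF assms(1,2)] .
  have "\<bar>w \<bullet> z\<bar> \<le> norm z"
    using Cauchy_Schwarz_ineq2[of w z] assms(3) mult_left_le_one_le[of "norm z" "norm w"] by simp
  also have "\<dots> \<le> norm (A z) / sigma_min A"
    using sigma_min_mult_norm_le[OF assms(1) z] \<sigma> by (simp add: field_simps)
  also have "\<dots> < \<epsilon> / sigma_min A"
    using assms(1,4) x y \<sigma> by (simp add: linear_add divide_strict_right_mono)
  finally have z_part: "\<bar>w \<bullet> z\<bar> < \<epsilon> / sigma_min A" .
  have "norm x ^ 2 = norm y ^ 2 + norm z ^ 2"
    using x y z norm_add_Pythagorean[of y z] by (simp add: orthogonal_def inner_commute)
  then have "norm y \<le> norm x"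
    by (simp add: power2_le_imp_le)
  then have y_part: "\<bar>w \<bullet> y\<bar> \<le> teaching_risk A w * norm x"
    using abs_inner_kernel_le_teaching_risk[OF assms(1) y] teaching_risk_nonneg[OF assms(1)]
    by (meson mult_left_mono order.trans)
  have "\<bar>w \<bullet> x\<bar> \<le> \<bar>w \<bullet> z\<bar> + \<bar>w \<bullet> y\<bar>"
    using x by (simp add: inner_add_right)
  with z_part y_part show ?thesis
    by linarith
qed

theorem theorem1:
  fixes T :: "'s::finite \<Rightarrow> 'act::finite \<Rightarrow> 's pmf"
    and D :: "'s pmf"
    and \<gamma> :: real
    and \<phi> :: "'s \<Rightarrow> real^'k"
    and w :: "real^'k"
    and A :: "real^'k \<Rightarrow> real^'l"
    and piT piL :: "'s \<Rightarrow> 'act pmf"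
    and \<epsilon> :: real
  assumes "0 < \<gamma>" and "\<gamma> < 1"
    and "norm w = 1"
    and "linear A"
    and "A \<noteq> (\<lambda>_. 0)"
    and "norm (A (feat_exp T D \<gamma> \<phi> piT - feat_exp T D \<gamma> \<phi> piL)) < \<epsilon>"
  shows "\<bar>w \<bullet> (feat_exp T D \<gamma> \<phi> piT - feat_exp T D \<gamma> \<phi> piL)\<bar>
           < \<epsilon> / sigma_min A
             + teaching_risk A w * diameter (range (feat_exp T D \<gamma> \<phi>))"
proof -
  let ?\<mu> = "feat_exp T D \<gamma> \<phi>"
  have "bounded (range ?\<mu>)"
    using assms(1,2) by (intro bounded_range_feat_exp) simp
  then have "norm (?\<mu> piT - ?\<mu> piL) \<le> diameter (range ?\<mu>)"
    using diameter_bounded_bound[of "range ?\<mu>"] by (simp add: dist_norm)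
  then have "teaching_risk A w * norm (?\<mu> piT - ?\<mu> piL)
               \<le> teaching_risk A w * diameter (range ?\<mu>)"
    using teaching_risk_nonneg[OF assms(4)] by (rule mult_left_mono)
  moreover have "\<bar>w \<bullet> (?\<mu> piT - ?\<mu> piL)\<bar>
                   < \<epsilon> / sigma_min A + teaching_risk A w * norm (?\<mu> piT - ?\<mu> piL)"
    using assms(3-6) by (intro abs_inner_lt_sigma_min_teaching_risk) simp_all
  ultimately show ?thesis
    by linarith
qed

end
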